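(* Let $\mathcal{H}=\bigotimes_{a=1}^N\mathcal{H}_a$ be finite-dimensional, $\mathcal{N}=\{\mathcal{N}_k\}$ a non-trivial neighborhood structure, and $\Phi_{\mathcal{N}}$ the quasi-local projector defined below. For any $\rho,\sigma\in\mathcal{D}(\mathcal{H})$, one has $\rho_{\mathcal{N}_k}=\sigma_{\mathcal{N}_k}$ for all $\mathcal{N}_k\in\mathcal{N}$ if and only if $\Phi_{\mathcal{N}}(\sigma)=\Phi_{\mathcal{N}}(\rho)$.
   Context: $\mathcal{D}(\mathcal{H})$ is the set of density operators; $\mathcal{B}(\mathcal{H})$ the space of linear operators. A neighborhood is $\mathcal{N}_k\subsetneq\{1,\dots,N\}$ with complement $\overline{\mathcal{N}}_k$; a neighborhood structure is a finite collection of neighborhoods, non-trivial if every index lies in some neighborhood and each neighborhood intersects another. $\rho_{\mathcal{N}_k}=\mathrm{tr}_{\overline{\mathcal{N}}_k}\rho$. For each $a$ fix an orthonormal (Hilbert–Schmidt) basis of Hermitian operators on $\mathcal{H}_a$ consisting of the (normalized) identity $I_a$ and traceless Hermitian operators $X^a_{i_a}$, $i_a=1,\dots,d_a^2-1$; let $\mathcal{X}$ be the orthonormal product basis of $\mathcal{B}(\mathcal{H})$ formed by all $N$-fold tensor products. For $X_i\in\mathcal{X}$ let $\Phi_{X_i}(M)=\mathrm{tr}(X_iM)X_i$. Let $\mathcal{X}_{\mathcal{N}_k}$ be the set of $X_i\in\mathcal{X}$ of the form $X^i_{\mathcal{N}_k}\otimes I_{\overline{\mathcal{N}}_k}$ (identity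 factors outside $\mathcal{N}_k$), $\mathcal{X}_{\mathcal{N}}=\bigcup_k\mathcal{X}_{\mathcal{N}_k}$, and $\Phi_{\mathcal{N}}=\sum_{X_i\in\mathcal{X}_{\mathcal{N}}}\Phi_{X_i}$. *)

theory Defs
  imports "HOL-Analysis.Analysis"
begin

text \<open>Subsystems are indexed by a < N (0-based). Subsystem a has dimension d a.
  A basis vector of H = tensor product of the H_a is a tuple x in basis_tuples N d.
  Operators on H are represented by their matrices (functions of two tuples).\<close>

type_synonym tuple = "nat \<Rightarrow> nat"
type_synonym op = "tuple \<Rightarrow> tuple \<Rightarrow> complex"

definition tuples_on :: "nat set \<Rightarrow> (nat \<Rightarrow> nat) \<Rightarrow> tuple set" where
  "tuples_on S d = PiE S (\<lambda>a. {..<d a})"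

definition basis_tuples :: "nat \<Rightarrow> (nat \<Rightarrow> nat) \<Rightarrow> tuple set" where
  "basis_tuples N d = tuples_on {..<N} d"

definition density_op :: "nat \<Rightarrow> (nat \<Rightarrow> nat) \<Rightarrow> op \<Rightarrow> bool" where
  "density_op N d \<rho> \<longleftrightarrow>
     (\<forall>v :: tuple \<Rightarrow> complex.
        (\<Sum>x\<in>basis_tuples N d. \<Sum>y\<in>basis_tuples N d. cnj (v x) * \<rho> x y * v y) \<in> \<real> \<and>
        Re (\<Sum>x\<in>basis_tuples N d. \<Sum>y\<in>basis_tuples N d. cnj (v x) * \<rho> x y * v y) \<ge> 0)
     \<and> (\<Sum>x\<in>basis_tuples N d. \<rho> x x) = 1"

definition merge_tuple :: "nat set \<Rightarrow> tuple \<Rightarrow> tuple \<Rightarrow> tuple" where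
  "merge_tuple K x z = (\<lambda>a. if a \<in> K then x a else z a)"

text \<open>Partial trace over the complement of K: the reduced operator rho_K on the
  tensor product of the H_a, a in K.\<close>
definition ptrace :: "nat \<Rightarrow> (nat \<Rightarrow> nat) \<Rightarrow> nat set \<Rightarrow> op \<Rightarrow> op" where
  "ptrace N d K \<rho> = (\<lambda>x y.
     if x \<in> tuples_on K d \<and> y \<in> tuples_on K d then
       (\<Sum>z\<in>tuples_on ({..<N} - K) d. \<rho> (merge_tuple K x z) (merge_tuple K y z))
     else 0)"

definition nontrivial_neighborhood_structure :: "nat \<Rightarrow> nat set set \<Rightarrow> bool" where
  "nontrivial_neighborhood_structure N NS \<longleftrightarrow>
     finite NS \<and> (\<forall>K\<in>NS. K \<subset> {..<N}) \<and>
     (\<forall>a<N. \<exists>K\<in>NS. a \<in> K) \<and>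
     (\<forall>K\<in>NS. \<exists>K'\<in>NS. K' \<noteq> K \<and> K \<inter> K' \<noteq> {})"

text \<open>B a j r c : the (r,c) matrix entry of the j-th element (j < d a ^ 2) of the
  local Hilbert--Schmidt orthonormal Hermitian basis on H_a; element 0 is the normalized
  identity, the others are traceless.\<close>
definition local_bases :: "nat \<Rightarrow> (nat \<Rightarrow> nat) \<Rightarrow> (nat \<Rightarrow> nat \<Rightarrow> nat \<Rightarrow> nat \<Rightarrow> complex) \<Rightarrow> bool" where
  "local_bases N d B \<longleftrightarrow> (\<forall>a<N.
     (\<forall>j<d a ^ 2. \<forall>r<d a. \<forall>c<d a. B a j r c = cnj (B a j c r)) \<and>
     (\<forall>j<d a ^ 2. \<forall>j'<d a ^ 2.
        (\<Sum>r<d a. \<Sum>c<d a. cnj (B a j r c) * B a j' r c) = (if j = j' then 1 else 0)) \<and>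
     (\<forall>r<d a. \<forall>c<d a. B a 0 r c = (if r = c then 1 / complex_of_real (sqrt (real (d a))) else 0)) \<and>
     (\<forall>j. 1 \<le> j \<and> j < d a ^ 2 \<longrightarrow> (\<Sum>r<d a. B a j r r) = 0))"

definition prod_basis :: "nat \<Rightarrow> (nat \<Rightarrow> nat) \<Rightarrow> (nat \<Rightarrow> nat \<Rightarrow> nat \<Rightarrow> nat \<Rightarrow> complex) \<Rightarrow> tuple \<Rightarrow> op" where
  "prod_basis N d B j = (\<lambda>x y.
     if x \<in> basis_tuples N d \<and> y \<in> basis_tuples N d
     then (\<Prod>a<N. B a (j a) (x a) (y a)) else 0)"

definition multi_indices :: "nat \<Rightarrow> (nat \<Rightarrow> nat) \<Rightarrow> tuple set" where
  "multi_indices N d = PiE {..<N} (\<lambda>a. {..<d a ^ 2})"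

text \<open>Multi-indices of elements of X_N: identity factor outside some neighborhood.\<close>
definition nbhd_indices :: "nat \<Rightarrow> (nat \<Rightarrow> nat) \<Rightarrow> nat set set \<Rightarrow> tuple set" where
  "nbhd_indices N d NS = {j \<in> multi_indices N d. \<exists>K\<in>NS. \<forall>a<N. a \<notin> K \<longrightarrow> j a = 0}"

definition op_trace :: "nat \<Rightarrow> (nat \<Rightarrow> nat) \<Rightarrow> op \<Rightarrow> complex" where
  "op_trace N d M = (\<Sum>x\<in>basis_tuples N d. M x x)"

definition op_mult :: "nat \<Rightarrow> (nat \<Rightarrow> nat) \<Rightarrow> op \<Rightarrow> op \<Rightarrow> op" where
  "op_mult N d A M = (\<lambda>x y. \<Sum>z\<in>basis_tuples N d. A x z * M z y)"

definition Phi_X :: "nat \<Rightarrow> (nat \<Rightarrow> nat) \<Rightarrow> op \<Rightarrow> op \<Rightarrow> op" where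
  "Phi_X N d X M = (\<lambda>x y. op_trace N d (op_mult N d X M) * X x y)"

definition Phi_N :: "nat \<Rightarrow> (nat \<Rightarrow> nat) \<Rightarrow> (nat \<Rightarrow> nat \<Rightarrow> nat \<Rightarrow> nat \<Rightarrow> complex) \<Rightarrow> nat set set \<Rightarrow> op \<Rightarrow> op" where
  "Phi_N N d B NS M = (\<lambda>x y. \<Sum>j\<in>nbhd_indices N d NS. Phi_X N d (prod_basis N d B j) M x y)"

end

theory Submission
  imports Defs "Jordan_Normal_Form.Determinant"
begin

text \<open>A coefficient \<open>tr(X\<^sub>j \<rho>)\<close> kept by \<open>\<Phi>\<^sub>\<N>\<close> belongs to a product basis element that is the
  identity outside some neighbourhood \<open>K\<close>, so it is a nonzero multiple of \<open>tr(P\<^sub>j \<rho>\<^sub>K)\<close>. The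
  \<open>P\<^sub>j\<close> form an orthonormal, hence (by counting dimensions) complete, basis of operators on the
  subsystem \<open>K\<close>; thus the reduced states on the neighbourhoods are equivalent data to the kept
  coefficients, and these are in turn read off from \<open>\<Phi>\<^sub>\<N>(\<rho>)\<close> by orthonormality.\<close>

lemma sum_lessThan_mult_div_mod:
  fixes g :: "nat \<Rightarrow> nat \<Rightarrow> 'a::comm_monoid_add"
  shows "(\<Sum>k<m * n. g (k div n) (k mod n)) = (\<Sum>r<m. \<Sum>c<n. g r c)"
proof -
  have "(\<Sum>k<m * n. g (k div n) (k mod n)) = (\<Sum>r<m. \<Sum>k\<in>{r * n..<r * n + n}. g (k div n) (k mod n))"
    by (rule sum.nat_group[symmetric])
  also have "\<dots> = (\<Sum>r<m. \<Sum>c<n. g ((r * n + c) div n) ((r * n + c) mod n))"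
    by (subst sum.atLeastLessThan_shift_0) (simp add: atLeast0LessThan add.commute)
  also have "\<dots> = (\<Sum>r<m. \<Sum>c<n. g r c)"
    by (intro sum.cong refl) auto
  finally show ?thesis .
qed

text \<open>A square matrix with orthonormal rows is unitary, so its columns are orthonormal as well.\<close>
lemma orthonormal_rows_imp_orthonormal_cols:
  fixes f :: "nat \<Rightarrow> nat \<Rightarrow> complex"
  assumes rows: "\<forall>i<m. \<forall>j<m. (\<Sum>k<m. cnj (f i k) * f j k) = (if i = j then 1 else 0)"
    and "k < m" "k' < m"
  shows "(\<Sum>i<m. f i k * cnj (f i k')) = (if k = k' then 1 else 0)"
proof -
  define A where "A = Matrix.mat m m (\<lambda>(i, k). cnj (f i k))"
  define C where "C = Matrix.mat m m (\<lambda>(k, i). f i k)"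
  have "A * C = 1\<^sub>m m"
    using rows by (intro eq_matI) (auto simp: A_def C_def scalar_prod_def lessThan_atLeast0)
  then have "C * A = 1\<^sub>m m"
    by (rule mat_mult_left_right_inverse[rotated 2]) (auto simp: A_def C_def)
  then have "(C * A) $$ (k, k') = (if k = k' then 1 else 0)"
    using assms(2,3) by simp
  then show ?thesis
    using assms(2,3) by (simp add: A_def C_def scalar_prod_def lessThan_atLeast0)
qed

lemma local_bases_orthonormal:
  assumes "local_bases N d B" "a < N" "i < d a ^ 2" "i' < d a ^ 2"
  shows "(\<Sum>r<d a. \<Sum>c<d a. cnj (B a i r c) * B a i' r c) = (if i = i' then 1 else 0)"
  using assms unfolding local_bases_def by blast

lemma local_bases_identity:
  assumes "local_bases N d B" "a < N" "r < d a" "c < d a"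
  shows "B a 0 r c = (if r = c then 1 / complex_of_real (sqrt (real (d a))) else 0)"
  using assms unfolding local_bases_def by blast

lemma local_basis_complete:
  assumes lb: "local_bases N d B" and a: "a < N"
    and rc: "r < d a" "c < d a" "r' < d a" "c' < d a"
  shows "(\<Sum>i<d a ^ 2. B a i r' c' * cnj (B a i r c)) = (if r = r' \<and> c = c' then 1 else 0)"
proof -
  define n where "n = d a"
  \<comment> \<open>flatten the \<open>n \<times> n\<close> basis matrices to rows of length \<open>n\<^sup>2\<close>; there are \<open>n\<^sup>2\<close> of them\<close>
  define f where "f i k = B a i (k div n) (k mod n)" for i k
  have "(\<Sum>k<n * n. cnj (f i k) * f j k) = (\<Sum>r<n. \<Sum>c<n. cnj (B a i r c) * B a j r c)" for i j
    unfolding f_def by (rule sum_lessThan_mult_div_mod)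
  then have rows: "\<forall>i<n * n. \<forall>j<n * n. (\<Sum>k<n * n. cnj (f i k) * f j k) = (if i = j then 1 else 0)"
    using local_bases_orthonormal[OF lb a] by (simp add: n_def power2_eq_square)
  have encode_less: "x * n + y < n * n" if "x < n" "y < n" for x y
  proof -
    have "x * n + y < Suc x * n" using that by simp
    also have "\<dots> \<le> n * n" using that by (intro mult_le_mono1) simp
    finally show ?thesis .
  qed
  have encode_eq: "r' * n + c' = r * n + c \<longleftrightarrow> r = r' \<and> c = c'"
  proof
    assume "r' * n + c' = r * n + c"
    then have "(r' * n + c') div n = (r * n + c) div n" "(r' * n + c') mod n = (r * n + c) mod n"
      by simp_all
    then show "r = r' \<and> c = c'" using rc by (simp add: n_def)
  qed simp
  have "(\<Sum>i<n * n. f i (r' * n + c') * cnj (f i (r * n + c))) = (if r = r' \<and> c = c' then 1 else 0)"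
    using orthonormal_rows_imp_orthonormal_cols[OF rows] encode_less encode_eq rc
    by (simp add: n_def)
  then show ?thesis
    using rc by (simp add: f_def n_def power2_eq_square)
qed

lemma prod_if_all:
  fixes f :: "'a \<Rightarrow> 'b::comm_semiring_1"
  shows "finite K \<Longrightarrow> (\<Prod>a\<in>K. if P a then f a else 0) = (if \<forall>a\<in>K. P a then prod f K else 0)"
  by (induction K rule: finite_induct) auto

lemma PiE_eq_iff_pointwise:
  assumes "x \<in> PiE S A" "y \<in> PiE S A'"
  shows "x = y \<longleftrightarrow> (\<forall>a\<in>S. x a = y a)"
  using assms by (auto simp: PiE_iff intro: extensionalityI)

lemma finite_tuples_on: "finite S \<Longrightarrow> finite (tuples_on S d)"
  unfolding tuples_on_def by (rule finite_PiE) auto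

lemma finite_multi_indices: "finite (multi_indices N d)"
  unfolding multi_indices_def by (rule finite_PiE) auto

lemma merge_tuple_in_basis_tuples:
  assumes "K \<subseteq> {..<N}" "u \<in> tuples_on K d" "v \<in> tuples_on ({..<N} - K) d"
  shows "merge_tuple K u v \<in> basis_tuples N d"
  using assms unfolding basis_tuples_def tuples_on_def merge_tuple_def
  by (auto simp: PiE_iff extensional_def)

lemma bij_betw_merge_tuple:
  assumes "K \<subseteq> {..<N}"
  shows "bij_betw (\<lambda>(u, v). merge_tuple K u v)
    (tuples_on K d \<times> tuples_on ({..<N} - K) d) (basis_tuples N d)"
proof (rule bij_betwI[where g = "\<lambda>x. (restrict x K, restrict x ({..<N} - K))"])
  show "(\<lambda>(u, v). merge_tuple K u v) \<in> tuples_on K d \<times> tuples_on ({..<N} - K) d \<rightarrow> basis_tuples N d"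
    using merge_tuple_in_basis_tuples[OF assms] by auto
  show "(\<lambda>x. (restrict x K, restrict x ({..<N} - K))) \<in>
      basis_tuples N d \<rightarrow> tuples_on K d \<times> tuples_on ({..<N} - K) d"
    using assms unfolding basis_tuples_def tuples_on_def by (auto simp: PiE_iff)
  show "(\<lambda>x. (restrict x K, restrict x ({..<N} - K))) ((\<lambda>(u, v). merge_tuple K u v) p) = p"
    if "p \<in> tuples_on K d \<times> tuples_on ({..<N} - K) d" for p
    using that unfolding tuples_on_def
    by (cases p) (auto simp: PiE_iff extensional_def merge_tuple_def fun_eq_iff)
  show "(\<lambda>(u, v). merge_tuple K u v) (restrict x K, restrict x ({..<N} - K)) = x"
    if "x \<in> basis_tuples N d" for x
    using that assms unfolding basis_tuples_def tuples_on_def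
    by (auto simp: PiE_iff extensional_def merge_tuple_def fun_eq_iff)
qed

lemma sum_basis_tuples_split:
  assumes "K \<subseteq> {..<N}"
  shows "(\<Sum>x\<in>basis_tuples N d. f x) =
    (\<Sum>u\<in>tuples_on K d. \<Sum>v\<in>tuples_on ({..<N} - K) d. f (merge_tuple K u v))"
  using sum.reindex_bij_betw[OF bij_betw_merge_tuple[OF assms], of f]
  by (simp add: sum.cartesian_product case_prod_unfold)

lemma prod_basis_orthonormal:
  assumes lb: "local_bases N d B" and j: "j \<in> multi_indices N d" and j': "j' \<in> multi_indices N d"
  shows "(\<Sum>x\<in>basis_tuples N d. \<Sum>y\<in>basis_tuples N d.
      cnj (prod_basis N d B j' x y) * prod_basis N d B j x y) = (if j = j' then 1 else 0)"
proof -
  let ?T = "basis_tuples N d"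
  have T: "?T = PiE {..<N} (\<lambda>a. {..<d a})" by (simp add: basis_tuples_def tuples_on_def)
  have "(\<Sum>x\<in>?T. \<Sum>y\<in>?T. cnj (prod_basis N d B j' x y) * prod_basis N d B j x y)
     = (\<Sum>x\<in>?T. \<Sum>y\<in>?T. \<Prod>a<N. cnj (B a (j' a) (x a) (y a)) * B a (j a) (x a) (y a))"
    by (intro sum.cong refl) (simp add: prod_basis_def prod.distrib cnj_prod)
  also have "\<dots> = (\<Sum>x\<in>?T. \<Prod>a<N. \<Sum>c<d a. cnj (B a (j' a) (x a) c) * B a (j a) (x a) c)"
    unfolding T by (intro sum.cong refl prod_sum_PiE[symmetric]) auto
  also have "\<dots> = (\<Prod>a<N. \<Sum>r<d a. \<Sum>c<d a. cnj (B a (j' a) r c) * B a (j a) r c)"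
    unfolding T by (rule prod_sum_PiE[symmetric]) auto
  also have "\<dots> = (\<Prod>a<N. if j a = j' a then 1 else 0)"
  proof (intro prod.cong refl)
    fix a assume a: "a \<in> {..<N}"
    then have "j a < d a ^ 2" "j' a < d a ^ 2" using j j' unfolding multi_indices_def by auto
    with lb a show "(\<Sum>r<d a. \<Sum>c<d a. cnj (B a (j' a) r c) * B a (j a) r c) = (if j a = j' a then 1 else 0)"
      by (auto simp: local_bases_orthonormal)
  qed
  also have "\<dots> = (if j = j' then 1 else 0)"
    using PiE_eq_iff_pointwise[OF j[unfolded multi_indices_def] j'[unfolded multi_indices_def]]
    by (simp add: prod_if_all)
  finally show ?thesis .
qed

definition sub_trace_mult :: "(nat \<Rightarrow> nat) \<Rightarrow> nat set \<Rightarrow> op \<Rightarrow> op \<Rightarrow> complex" where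
  "sub_trace_mult d K A M = (\<Sum>u\<in>tuples_on K d. \<Sum>u'\<in>tuples_on K d. A u u' * M u' u)"

definition local_basis_op :: "(nat \<Rightarrow> nat \<Rightarrow> nat \<Rightarrow> nat \<Rightarrow> complex) \<Rightarrow> nat set \<Rightarrow> tuple \<Rightarrow> op" where
  "local_basis_op B K j = (\<lambda>u u'. \<Prod>a\<in>K. B a (j a) (u a) (u' a))"

lemma local_basis_op_complete:
  assumes lb: "local_bases N d B" and K: "K \<subseteq> {..<N}"
    and u: "u \<in> tuples_on K d" and u': "u' \<in> tuples_on K d"
    and w: "w \<in> tuples_on K d" and w': "w' \<in> tuples_on K d"
  shows "(\<Sum>j\<in>PiE K (\<lambda>a. {..<d a ^ 2}). local_basis_op B K j u u' * cnj (local_basis_op B K j w w'))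
    = (if u = w \<and> u' = w' then 1 else 0)"
proof -
  have fK: "finite K" using K finite_subset by blast
  have "(\<Sum>j\<in>PiE K (\<lambda>a. {..<d a ^ 2}). local_basis_op B K j u u' * cnj (local_basis_op B K j w w'))
     = (\<Prod>a\<in>K. \<Sum>i<d a ^ 2. B a i (u a) (u' a) * cnj (B a i (w a) (w' a)))"
    by (simp add: local_basis_op_def prod_sum_PiE[OF fK] prod.distrib[symmetric] cnj_prod)
  also have "\<dots> = (\<Prod>a\<in>K. if u a = w a \<and> u' a = w' a then 1 else 0)"
  proof (intro prod.cong refl)
    fix a assume a: "a \<in> K"
    then have "u a < d a" "u' a < d a" "w a < d a" "w' a < d a"
      using u u' w w' unfolding tuples_on_def by auto
    with a K show "(\<Sum>i<d a ^ 2. B a i (u a) (u' a) * cnj (B a i (w a) (w' a))) =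
        (if u a = w a \<and> u' a = w' a then 1 else 0)"
      using local_basis_complete[OF lb, of a "w a" "w' a" "u a" "u' a"] by auto
  qed
  also have "\<dots> = (if u = w \<and> u' = w' then 1 else 0)"
    using PiE_eq_iff_pointwise[OF u[unfolded tuples_on_def] w[unfolded tuples_on_def]]
      PiE_eq_iff_pointwise[OF u'[unfolded tuples_on_def] w'[unfolded tuples_on_def]] fK
    by (simp add: prod_if_all ball_conj_distrib)
  finally show ?thesis .
qed

lemma sub_trace_mult_expansion:
  assumes lb: "local_bases N d B" and K: "K \<subseteq> {..<N}"
    and x: "x \<in> tuples_on K d" and y: "y \<in> tuples_on K d"
  shows "M x y = (\<Sum>j\<in>PiE K (\<lambda>a. {..<d a ^ 2}).
    cnj (local_basis_op B K j y x) * sub_trace_mult d K (local_basis_op B K j) M)"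
proof -
  let ?TK = "tuples_on K d" and ?JK = "PiE K (\<lambda>a. {..<d a ^ 2})" and ?P = "local_basis_op B K"
  have fK: "finite ?TK" using K finite_subset by (auto intro!: finite_tuples_on)
  have "(\<Sum>j\<in>?JK. cnj (?P j y x) * sub_trace_mult d K (?P j) M)
      = (\<Sum>u\<in>?TK. \<Sum>u'\<in>?TK. M u' u * (\<Sum>j\<in>?JK. ?P j u u' * cnj (?P j y x)))"
    unfolding sub_trace_mult_def
    by (simp add: sum_distrib_left sum.swap[where A = ?JK] mult_ac)
  also have "\<dots> = (\<Sum>u\<in>?TK. \<Sum>u'\<in>?TK. if u = y \<and> u' = x then M u' u else 0)"
    using local_basis_op_complete[OF lb K _ _ y x] by (intro sum.cong refl) auto
  also have "\<dots> = (\<Sum>u\<in>?TK. if u = y then M x u else 0)"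
    using fK x by (intro sum.cong refl) (cases "u = y"; simp)
  also have "\<dots> = M x y"
    using fK y by simp
  finally show ?thesis by simp
qed

lemma prod_basis_merge_tuple:
  assumes lb: "local_bases N d B" and K: "K \<subseteq> {..<N}" and j0: "\<forall>a<N. a \<notin> K \<longrightarrow> j a = 0"
    and u: "u \<in> tuples_on K d" "u' \<in> tuples_on K d"
    and v: "v \<in> tuples_on ({..<N} - K) d" "v' \<in> tuples_on ({..<N} - K) d"
  shows "prod_basis N d B j (merge_tuple K u v) (merge_tuple K u' v') =
    (if v = v' then (\<Prod>a\<in>{..<N} - K. 1 / complex_of_real (sqrt (real (d a)))) * local_basis_op B K j u u'
     else 0)"
proof -
  let ?C = "{..<N} - K" and ?m = "merge_tuple K"
  have "prod_basis N d B j (?m u v) (?m u' v') =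
      (\<Prod>a\<in>?C. B a (j a) (?m u v a) (?m u' v' a)) * (\<Prod>a\<in>K. B a (j a) (?m u v a) (?m u' v' a))"
    using K merge_tuple_in_basis_tuples[OF K] u v
    by (simp add: prod_basis_def prod.subset_diff[of K "{..<N}"])
  also have "(\<Prod>a\<in>K. B a (j a) (?m u v a) (?m u' v' a)) = local_basis_op B K j u u'"
    by (simp add: local_basis_op_def merge_tuple_def)
  also have "(\<Prod>a\<in>?C. B a (j a) (?m u v a) (?m u' v' a)) =
      (\<Prod>a\<in>?C. if v a = v' a then 1 / complex_of_real (sqrt (real (d a))) else 0)"
  proof (intro prod.cong refl)
    fix a assume a: "a \<in> ?C"
    then have "v a < d a" "v' a < d a" using v unfolding tuples_on_def by auto
    with a j0 lb show "B a (j a) (?m u v a) (?m u' v' a) =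
        (if v a = v' a then 1 / complex_of_real (sqrt (real (d a))) else 0)"
      by (simp add: merge_tuple_def local_bases_identity)
  qed
  also have "\<dots> = (if v = v' then \<Prod>a\<in>?C. 1 / complex_of_real (sqrt (real (d a))) else 0)"
    using PiE_eq_iff_pointwise[OF v[unfolded tuples_on_def]] by (simp add: prod_if_all)
  finally show ?thesis by simp
qed

text \<open>A product basis element acting as the identity outside \<open>K\<close> is \<open>c \<cdot> P \<otimes> I\<close>, so its
  coefficient only sees the reduced operator on \<open>K\<close>.\<close>
lemma trace_prod_basis_eq_sub_trace_ptrace:
  assumes lb: "local_bases N d B" and K: "K \<subseteq> {..<N}" and j0: "\<forall>a<N. a \<notin> K \<longrightarrow> j a = 0"
  shows "op_trace N d (op_mult N d (prod_basis N d B j) \<rho>) =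
    (\<Prod>a\<in>{..<N} - K. 1 / complex_of_real (sqrt (real (d a)))) *
    sub_trace_mult d K (local_basis_op B K j) (ptrace N d K \<rho>)"
proof -
  let ?TK = "tuples_on K d" and ?TC = "tuples_on ({..<N} - K) d" and ?m = "merge_tuple K"
  let ?c = "\<Prod>a\<in>{..<N} - K. 1 / complex_of_real (sqrt (real (d a)))"
  let ?P = "local_basis_op B K j"
  have fC: "finite ?TC" by (simp add: finite_tuples_on)
  have "op_trace N d (op_mult N d (prod_basis N d B j) \<rho>) =
      (\<Sum>u\<in>?TK. \<Sum>v\<in>?TC. \<Sum>u'\<in>?TK. \<Sum>v'\<in>?TC.
        prod_basis N d B j (?m u v) (?m u' v') * \<rho> (?m u' v') (?m u v))"
    unfolding op_trace_def op_mult_def by (simp add: sum_basis_tuples_split[OF K])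
  also have "\<dots> = (\<Sum>u\<in>?TK. \<Sum>v\<in>?TC. \<Sum>u'\<in>?TK. ?c * (?P u u' * \<rho> (?m u' v) (?m u v)))"
  proof (intro sum.cong refl)
    fix u v u' assume uv: "u \<in> ?TK" "v \<in> ?TC" "u' \<in> ?TK"
    have "(\<Sum>v'\<in>?TC. prod_basis N d B j (?m u v) (?m u' v') * \<rho> (?m u' v') (?m u v)) =
        (\<Sum>v'\<in>?TC. if v = v' then ?c * (?P u u' * \<rho> (?m u' v') (?m u v)) else 0)"
      using uv by (intro sum.cong refl) (simp add: prod_basis_merge_tuple[OF lb K j0])
    also have "\<dots> = ?c * (?P u u' * \<rho> (?m u' v) (?m u v))"
      using fC uv by simp
    finally show "(\<Sum>v'\<in>?TC. prod_basis N d B j (?m u v) (?m u' v') * \<rho> (?m u' v') (?m u v)) =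
        ?c * (?P u u' * \<rho> (?m u' v) (?m u v))" .
  qed
  also have "\<dots> = (\<Sum>u\<in>?TK. \<Sum>u'\<in>?TK. \<Sum>v\<in>?TC. ?c * (?P u u' * \<rho> (?m u' v) (?m u v)))"
    by (intro sum.cong refl sum.swap)
  also have "\<dots> = (\<Sum>u\<in>?TK. \<Sum>u'\<in>?TK. ?c * (?P u u' * ptrace N d K \<rho> u' u))"
    unfolding ptrace_def by (intro sum.cong refl) (simp add: sum_distrib_left)
  also have "\<dots> = ?c * sub_trace_mult d K ?P (ptrace N d K \<rho>)"
    by (simp add: sub_trace_mult_def sum_distrib_left)
  finally show ?thesis .
qed

lemma ptrace_eq_iff_coeffs_eq:
  assumes d1: "\<forall>a<N. d a \<ge> 1" and lb: "local_bases N d B" and K: "K \<subseteq> {..<N}"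
  shows "ptrace N d K \<rho> = ptrace N d K \<sigma> \<longleftrightarrow>
    (\<forall>j\<in>multi_indices N d. (\<forall>a<N. a \<notin> K \<longrightarrow> j a = 0) \<longrightarrow>
      op_trace N d (op_mult N d (prod_basis N d B j) \<rho>) =
      op_trace N d (op_mult N d (prod_basis N d B j) \<sigma>))"
    (is "?lhs \<longleftrightarrow> ?rhs")
proof
  assume ?lhs then show ?rhs
    by (simp add: trace_prod_basis_eq_sub_trace_ptrace[OF lb K])
next
  assume coeffs: ?rhs
  let ?c = "\<Prod>a\<in>{..<N} - K. 1 / complex_of_real (sqrt (real (d a)))"
  have c: "?c \<noteq> 0" using d1 by (auto simp: prod_zero_iff)
  have sub_eq: "sub_trace_mult d K (local_basis_op B K j) (ptrace N d K \<rho>) =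
      sub_trace_mult d K (local_basis_op B K j) (ptrace N d K \<sigma>)"
    if j: "j \<in> PiE K (\<lambda>a. {..<d a ^ 2})" for j
  proof -
    define j' where "j' = restrict (\<lambda>a. if a \<in> K then j a else 0) {..<N}"
    have "j' \<in> multi_indices N d" "\<forall>a<N. a \<notin> K \<longrightarrow> j' a = 0"
      using j K d1 unfolding multi_indices_def j'_def by (auto simp: PiE_iff)
    moreover have "local_basis_op B K j' = local_basis_op B K j"
      using K unfolding local_basis_op_def j'_def by (intro ext prod.cong) auto
    ultimately show ?thesis
      using coeffs c by (auto simp: trace_prod_basis_eq_sub_trace_ptrace[OF lb K])
  qed
  show ?lhs
  proof (intro ext)
    fix x y
    show "ptrace N d K \<rho> x y = ptrace N d K \<sigma> x y"
    proof (cases "x \<in> tuples_on K d \<and> y \<in> tuples_on K d")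
      case True
      then show ?thesis using sub_eq
        by (simp add: sub_trace_mult_expansion[OF lb K, of x y])
    qed (auto simp: ptrace_def)
  qed
qed

lemma Phi_N_eq_iff_coeffs_eq:
  assumes lb: "local_bases N d B"
  shows "Phi_N N d B NS \<sigma> = Phi_N N d B NS \<rho> \<longleftrightarrow>
    (\<forall>j\<in>nbhd_indices N d NS. op_trace N d (op_mult N d (prod_basis N d B j) \<sigma>) =
      op_trace N d (op_mult N d (prod_basis N d B j) \<rho>))"
    (is "?lhs \<longleftrightarrow> ?rhs")
proof
  assume ?rhs then show ?lhs
    unfolding Phi_N_def Phi_X_def by (intro ext sum.cong refl) simp
next
  assume eq: ?lhs
  let ?J = "nbhd_indices N d NS" and ?T = "basis_tuples N d" and ?X = "prod_basis N d B"
  let ?D = "\<lambda>j. op_trace N d (op_mult N d (?X j) \<sigma>) - op_trace N d (op_mult N d (?X j) \<rho>)"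
  have fJ: "finite ?J" and Jm: "?J \<subseteq> multi_indices N d"
    using finite_multi_indices unfolding nbhd_indices_def by (auto intro: finite_subset)
  have diff_zero: "(\<Sum>j\<in>?J. ?D j * ?X j x y) = 0" for x y
    using fun_cong[OF fun_cong[OF eq, of x], of y]
    unfolding Phi_N_def Phi_X_def by (simp add: left_diff_distrib sum_subtractf)
  show ?rhs
  proof
    fix j' assume j': "j' \<in> ?J"
    have "0 = (\<Sum>x\<in>?T. \<Sum>y\<in>?T. cnj (?X j' x y) * (\<Sum>j\<in>?J. ?D j * ?X j x y))"
      by (simp add: diff_zero)
    also have "\<dots> = (\<Sum>x\<in>?T. \<Sum>y\<in>?T. \<Sum>j\<in>?J. ?D j * (cnj (?X j' x y) * ?X j x y))"
      by (simp add: sum_distrib_left mult.left_commute)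
    also have "\<dots> = (\<Sum>j\<in>?J. \<Sum>x\<in>?T. \<Sum>y\<in>?T. ?D j * (cnj (?X j' x y) * ?X j x y))"
      by (simp add: sum.swap[where A = ?J])
    also have "\<dots> = (\<Sum>j\<in>?J. ?D j * (\<Sum>x\<in>?T. \<Sum>y\<in>?T. cnj (?X j' x y) * ?X j x y))"
      by (simp add: sum_distrib_left)
    also have "\<dots> = (\<Sum>j\<in>?J. ?D j * (if j = j' then 1 else 0))"
      using Jm j' by (intro sum.cong refl) (simp add: prod_basis_orthonormal[OF lb] subset_iff)
    also have "\<dots> = ?D j'" using fJ j' by (simp add: if_distrib cong: if_cong)
    finally show "op_trace N d (op_mult N d (?X j') \<sigma>) = op_trace N d (op_mult N d (?X j') \<rho>)"
      by simp
  qed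
qed

theorem corollaryV1:
  fixes N :: nat and d :: "nat \<Rightarrow> nat" and NS :: "nat set set"
    and B :: "nat \<Rightarrow> nat \<Rightarrow> nat \<Rightarrow> nat \<Rightarrow> complex" and \<rho> \<sigma> :: op
  assumes "\<forall>a<N. d a \<ge> 1"
    and "nontrivial_neighborhood_structure N NS"
    and "local_bases N d B"
    and "density_op N d \<rho>" and "density_op N d \<sigma>"
  shows "(\<forall>K\<in>NS. ptrace N d K \<rho> = ptrace N d K \<sigma>) \<longleftrightarrow> Phi_N N d B NS \<sigma> = Phi_N N d B NS \<rho>"
proof -
  have NS_sub: "K \<subseteq> {..<N}" if "K \<in> NS" for K
    using assms(2) that unfolding nontrivial_neighborhood_structure_def by blast
  let ?coeff = "\<lambda>M j. op_trace N d (op_mult N d (prod_basis N d B j) M)"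
  have "(\<forall>K\<in>NS. ptrace N d K \<rho> = ptrace N d K \<sigma>) \<longleftrightarrow>
      (\<forall>K\<in>NS. \<forall>j\<in>multi_indices N d. (\<forall>a<N. a \<notin> K \<longrightarrow> j a = 0) \<longrightarrow> ?coeff \<sigma> j = ?coeff \<rho> j)"
    using ptrace_eq_iff_coeffs_eq[OF assms(1,3) NS_sub] by (metis (no_types, lifting))
  also have "\<dots> \<longleftrightarrow> (\<forall>j\<in>nbhd_indices N d NS. ?coeff \<sigma> j = ?coeff \<rho> j)"
    unfolding nbhd_indices_def by blast
  also have "\<dots> \<longleftrightarrow> Phi_N N d B NS \<sigma> = Phi_N N d B NS \<rho>"
    using Phi_N_eq_iff_coeffs_eq[OF assms(3)] by simp
  finally show ?thesis .
qed

end
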